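(* Let $M$ be a graded generalized Eulerian $A_n(K)$-module. Then for every $i\ge0$ the Koszul homology $H_i(X_1,\dots,X_n;M)$ is concentrated in degree $0$.
   Context: $K$ is a field of characteristic zero, $R=K[X_1,\dots,X_n]$ standard graded, $A_n(K)$ the Weyl algebra graded by $\deg X_i=1$, $\deg\partial_i=-1$; $\mathcal E_n=\sum_iX_i\partial_i$; $|z|$ is the degree of homogeneous $z$. A graded left $A_n(K)$-module $M$ is generalized Eulerian if for every homogeneous $z\in M$ there is $a\ge1$ with $(\mathcal E_n-|z|)^az=0$. Koszul homology $H_i(X_1,\dots,X_n;M)$ is computed from the graded Koszul complex $K_p=\bigoplus_{i_1<\dots<i_p}M(-p)$ with degree-$0$ differentials, so $H_0=M/(X_1,\dots,X_n)M$; here $M(l)_j=M_{j+l}$. *)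

theory Defs
  imports Complex_Main
begin

text \<open>A graded left module over the Weyl algebra A_n(K), K a field of characteristic 0.
  The module is the abelian group 'm with K-scalar multiplication scale; the graded pieces are
  Mg j (j an integer); the generators X_i and d_i (i < n) act by the maps X i and D i.\<close>

definition weyl_graded_module ::
  "('k::field_char_0 \<Rightarrow> 'm::ab_group_add \<Rightarrow> 'm) \<Rightarrow> nat \<Rightarrow> (int \<Rightarrow> 'm set)
    \<Rightarrow> (nat \<Rightarrow> 'm \<Rightarrow> 'm) \<Rightarrow> (nat \<Rightarrow> 'm \<Rightarrow> 'm) \<Rightarrow> bool" where
  "weyl_graded_module scale n Mg X D \<longleftrightarrow>
     vector_space scale \<and>
     (\<forall>j. module.subspace scale (Mg j)) \<and>
     (\<forall>z. \<exists>!f. finite {j. f j \<noteq> 0} \<and> (\<forall>j. f j \<in> Mg j) \<and> z = sum f {j. f j \<noteq> 0}) \<and>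
     (\<forall>i<n. Vector_Spaces.linear scale scale (X i) \<and> Vector_Spaces.linear scale scale (D i)) \<and>
     (\<forall>i<n. \<forall>j. \<forall>z\<in>Mg j. X i z \<in> Mg (j + 1) \<and> D i z \<in> Mg (j - 1)) \<and>
     (\<forall>i<n. \<forall>k<n. \<forall>z. X i (X k z) = X k (X i z) \<and> D i (D k z) = D k (D i z) \<and>
        D i (X k z) - X k (D i z) = (if i = k then z else 0))"

definition euler_op :: "nat \<Rightarrow> (nat \<Rightarrow> 'm \<Rightarrow> 'm) \<Rightarrow> (nat \<Rightarrow> 'm \<Rightarrow> 'm) \<Rightarrow> 'm \<Rightarrow> 'm::ab_group_add" where
  "euler_op n X D z = (\<Sum>i<n. X i (D i z))"

definition generalized_eulerian ::
  "('k::field_char_0 \<Rightarrow> 'm::ab_group_add \<Rightarrow> 'm) \<Rightarrow> nat \<Rightarrow> (int \<Rightarrow> 'm set)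
    \<Rightarrow> (nat \<Rightarrow> 'm \<Rightarrow> 'm) \<Rightarrow> (nat \<Rightarrow> 'm \<Rightarrow> 'm) \<Rightarrow> bool" where
  "generalized_eulerian scale n Mg X D \<longleftrightarrow>
     (\<forall>j. \<forall>z\<in>Mg j. \<exists>a::nat. a \<ge> 1 \<and>
        ((\<lambda>w. euler_op n X D w - scale (of_int j) w) ^^ a) z = 0)"

text \<open>Koszul complex: a p-chain is a function on p-element subsets of {0..<n}
  (zero elsewhere) with values in M(-p); it is homogeneous of degree j if each
  value lies in M(-p)_j = M_{j-p}.\<close>
definition koszul_chain :: "nat \<Rightarrow> (int \<Rightarrow> 'm::zero set) \<Rightarrow> nat \<Rightarrow> int \<Rightarrow> (nat set \<Rightarrow> 'm) \<Rightarrow> bool" where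
  "koszul_chain n Mg p j c \<longleftrightarrow>
     (\<forall>S. c S \<noteq> 0 \<longrightarrow> S \<subseteq> {..<n} \<and> card S = p) \<and> (\<forall>S. c S \<in> Mg (j - int p))"

definition koszul_d :: "nat \<Rightarrow> (nat \<Rightarrow> 'm \<Rightarrow> 'm) \<Rightarrow> (nat set \<Rightarrow> 'm) \<Rightarrow> nat set \<Rightarrow> 'm::ab_group_add" where
  "koszul_d n X c T = (\<Sum>k\<in>{..<n} - T.
      (if even (card {t\<in>T. t < k}) then X k (c (insert k T)) else - X k (c (insert k T))))"

end

theory Submission
  imports Defs
begin

text \<open>The operators D i give a homotopy h on the Koszul complex with dh + hd = E + p on
  p-chains. A p-chain of degree j takes values in M_(j-p), where E + p = (E - (j - p)) + j and
  E - (j - p) is locally nilpotent by the Eulerian hypothesis and commutes with d up to a shift.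
  So for j \<noteq> 0 the operator dh + hd is invertible on cycles of degree j, and every such cycle
  is a boundary.\<close>

definition signed :: "nat \<Rightarrow> 'a::ab_group_add \<Rightarrow> 'a" where
  "signed e x = (if even e then x else - x)"

lemma signed_add: "signed e (x + y) = signed e x + signed e y"
  by (simp add: signed_def)

lemma signed_signed: "signed a (signed b x) = signed (a + b) x"
  by (auto simp add: signed_def)

lemma signed_double [simp]: "signed (a + a) x = x"
  by (simp add: signed_def)

lemma signed_zero [simp]: "signed e 0 = 0"
  by (simp add: signed_def)

lemma signed_diff: "signed e (x - y) = signed e x - signed e y"
  by (simp add: signed_def)

lemma signed_sum: "signed e (sum f A) = (\<Sum>x\<in>A. signed e (f x))"
  by (auto simp add: signed_def sum_negf)

lemma additive_signed: "additive f \<Longrightarrow> f (signed e x) = signed e (f x)"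
  by (simp add: signed_def additive.minus)

lemma signed_add_cancel: "odd (a + b) \<Longrightarrow> signed a x + signed b x = 0"
  by (auto simp add: signed_def)

definition num_below :: "nat set \<Rightarrow> nat \<Rightarrow> nat" where
  "num_below T k = card {t\<in>T. t < k}"

lemma koszul_d_signed:
  "koszul_d n X c T = (\<Sum>k\<in>{..<n} - T. signed (num_below T k) (X k (c (insert k T))))"
  unfolding koszul_d_def signed_def num_below_def by simp

lemma num_below_insert:
  "finite A \<Longrightarrow> a \<notin> A \<Longrightarrow> num_below (insert a A) b = num_below A b + (if a < b then 1 else 0)"
proof -
  assume "finite A" "a \<notin> A"
  moreover have "{t\<in>insert a A. t < b} = (if a < b then insert a {t\<in>A. t < b} else {t\<in>A. t < b})"
    by auto
  ultimately show ?thesis by (simp add: num_below_def)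
qed

text \<open>Passing from T - {l} to insert k T by first inserting l and then k, or the other way round,
  picks up opposite signs.\<close>
lemma odd_num_below_exchange:
  assumes "finite T" and "l \<in> T" and "k \<notin> T"
  shows "odd ((num_below T k + num_below (insert k T - {l}) l)
            + (num_below (T - {l}) l + num_below (T - {l}) k))"
proof -
  have kl: "k \<noteq> l" using assms by auto
  have "T = insert l (T - {l})" using assms by auto
  then have "num_below T k = num_below (T - {l}) k + (if l < k then 1 else 0)"
    using num_below_insert[of "T - {l}" l k] assms by simp
  moreover have "num_below (insert k T - {l}) l = num_below (T - {l}) l + (if k < l then 1 else 0)"
    using num_below_insert[of "T - {l}" k l] assms kl by (simp add: insert_Diff_if)
  ultimately show ?thesis using kl by (cases "l < k") auto
qed

definition koszul_h :: "nat \<Rightarrow> (nat \<Rightarrow> 'm \<Rightarrow> 'm) \<Rightarrow> (nat set \<Rightarrow> 'm) \<Rightarrow> nat set \<Rightarrow> 'm::ab_group_add"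
  where "koszul_h n D c T = (if T \<subseteq> {..<n}
     then (\<Sum>l\<in>T. signed (num_below (T - {l}) l) (D l (c (T - {l})))) else 0)"

locale weyl_action =
  fixes n :: nat and X D :: "nat \<Rightarrow> 'm::ab_group_add \<Rightarrow> 'm"
  assumes X_additive: "i < n \<Longrightarrow> additive (X i)"
    and D_additive: "i < n \<Longrightarrow> additive (D i)"
    and X_commute: "i < n \<Longrightarrow> k < n \<Longrightarrow> X i (X k z) = X k (X i z)"
    and D_X_commutator: "i < n \<Longrightarrow> k < n \<Longrightarrow> D i (X k z) = X k (D i z) + (if i = k then z else 0)"
begin

lemma X_zero: "i < n \<Longrightarrow> X i 0 = 0"
  using X_additive additive.zero by blast

lemma D_zero: "i < n \<Longrightarrow> D i 0 = 0"
  using D_additive additive.zero by blast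

lemma X_add: "i < n \<Longrightarrow> X i (x + y) = X i x + X i y"
  using X_additive additive.add by blast

lemma D_add: "i < n \<Longrightarrow> D i (x + y) = D i x + D i y"
  using D_additive additive.add by blast

lemma X_diff: "i < n \<Longrightarrow> X i (x - y) = X i x - X i y"
  using X_additive additive.diff by blast

lemma X_sum: "i < n \<Longrightarrow> X i (sum f A) = (\<Sum>a\<in>A. X i (f a))"
  using X_additive additive.sum by blast

lemma D_sum: "i < n \<Longrightarrow> D i (sum f A) = (\<Sum>a\<in>A. D i (f a))"
  using D_additive additive.sum by blast

lemma X_signed: "i < n \<Longrightarrow> X i (signed e x) = signed e (X i x)"
  using X_additive additive_signed by blast

lemma D_signed: "i < n \<Longrightarrow> D i (signed e x) = signed e (D i x)"
  using D_additive additive_signed by blast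

lemma koszul_d_koszul_h_expand:
  assumes T: "T \<subseteq> {..<n}"
  shows "koszul_d n X (koszul_h n D c) T = (\<Sum>k\<in>{..<n} - T. X k (D k (c T)))
    + (\<Sum>k\<in>{..<n} - T. \<Sum>l\<in>T. signed (num_below T k + num_below (insert k T - {l}) l)
                                  (X k (D l (c (insert k T - {l})))))"
proof -
  have "signed (num_below T k) (X k (koszul_h n D c (insert k T))) = X k (D k (c T))
      + (\<Sum>l\<in>T. signed (num_below T k + num_below (insert k T - {l}) l)
                   (X k (D l (c (insert k T - {l})))))"
    if k: "k \<in> {..<n} - T" for k
  proof -
    have "finite T" using T finite_subset by blast
    with k T have "koszul_h n D c (insert k T) = signed (num_below T k) (D k (c T))
        + (\<Sum>l\<in>T. signed (num_below (insert k T - {l}) l) (D l (c (insert k T - {l}))))"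
      by (simp add: koszul_h_def)
    with k show ?thesis
      by (simp add: X_add X_sum X_signed signed_add signed_signed signed_sum)
  qed
  then show ?thesis
    by (simp add: koszul_d_signed sum.distrib)
qed

lemma koszul_h_koszul_d_expand:
  assumes T: "T \<subseteq> {..<n}"
  shows "koszul_h n D (koszul_d n X c) T = (\<Sum>l\<in>T. D l (X l (c T)))
    + (\<Sum>l\<in>T. \<Sum>k\<in>{..<n} - T. signed (num_below (T - {l}) l + num_below (T - {l}) k)
                                  (D l (X k (c (insert k (T - {l}))))))"
proof -
  have "signed (num_below (T - {l}) l) (D l (koszul_d n X c (T - {l}))) = D l (X l (c T))
      + (\<Sum>k\<in>{..<n} - T. signed (num_below (T - {l}) l + num_below (T - {l}) k)
                             (D l (X k (c (insert k (T - {l}))))))"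
    if l: "l \<in> T" for l
  proof -
    have U: "{..<n} - (T - {l}) = insert l ({..<n} - T)"
      using l T by auto
    have "koszul_d n X c (T - {l}) = (\<Sum>k\<in>insert l ({..<n} - T).
        signed (num_below (T - {l}) k) (X k (c (insert k (T - {l})))))"
      unfolding koszul_d_signed U ..
    also have "\<dots> = signed (num_below (T - {l}) l) (X l (c T))
        + (\<Sum>k\<in>{..<n} - T. signed (num_below (T - {l}) k) (X k (c (insert k (T - {l})))))"
      using l by (simp add: insert_absorb)
    finally show ?thesis
      using l T
      by (auto simp add: D_add D_sum D_signed signed_add signed_signed signed_sum)
  qed
  with T show ?thesis
    by (simp add: koszul_h_def sum.distrib)
qed

lemma koszul_homotopy_cross_terms:
  assumes T: "T \<subseteq> {..<n}"
  shows "(\<Sum>k\<in>{..<n} - T. \<Sum>l\<in>T. signed (num_below T k + num_below (insert k T - {l}) l)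
                                   (X k (D l (c (insert k T - {l})))))
    + (\<Sum>l\<in>T. \<Sum>k\<in>{..<n} - T. signed (num_below (T - {l}) l + num_below (T - {l}) k)
                                   (D l (X k (c (insert k (T - {l})))))) = 0"
proof -
  have "signed (num_below T k + num_below (insert k T - {l}) l) (X k (D l (c (insert k T - {l}))))
      + signed (num_below (T - {l}) l + num_below (T - {l}) k) (D l (X k (c (insert k (T - {l}))))) = 0"
    if k: "k \<in> {..<n} - T" and l: "l \<in> T" for k l
  proof -
    have "finite T" and "k \<notin> T" using T k finite_subset by auto
    moreover have "D l (X k (c (insert k (T - {l})))) = X k (D l (c (insert k T - {l})))"
      using D_X_commutator[of l k] k l T by (auto simp add: insert_Diff_if)
    ultimately show ?thesis
      by (simp only:) (rule signed_add_cancel[OF odd_num_below_exchange[OF _ l]])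
  qed
  then show ?thesis
    by (subst sum.swap[of _ T]) (simp add: sum.distrib[symmetric])
qed

lemma koszul_homotopy:
  assumes T: "T \<subseteq> {..<n}"
  shows "koszul_d n X (koszul_h n D c) T + koszul_h n D (koszul_d n X c) T
           = euler_op n X D (c T) + (\<Sum>l\<in>T. c T)"
proof -
  have "euler_op n X D (c T) = (\<Sum>k\<in>{..<n} - T. X k (D k (c T))) + (\<Sum>l\<in>T. X l (D l (c T)))"
    unfolding euler_op_def using sum.subset_diff[OF T] by simp
  moreover have "(\<Sum>l\<in>T. D l (X l (c T))) = (\<Sum>l\<in>T. X l (D l (c T)) + c T)"
    using T by (intro sum.cong refl) (auto simp add: D_X_commutator)
  ultimately show ?thesis
    using koszul_homotopy_cross_terms[OF T, of c]
    by (simp add: koszul_d_koszul_h_expand[OF T] koszul_h_koszul_d_expand[OF T] sum.distrib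
        algebra_simps)
qed

lemma euler_op_additive: "additive (euler_op n X D)"
proof
  fix x y
  have "(\<Sum>i<n. X i (D i (x + y))) = (\<Sum>i<n. X i (D i x) + X i (D i y))"
    by (intro sum.cong refl) (simp add: X_add D_add)
  then show "euler_op n X D (x + y) = euler_op n X D x + euler_op n X D y"
    by (simp add: euler_op_def sum.distrib)
qed

lemma euler_op_X: "k < n \<Longrightarrow> euler_op n X D (X k w) = X k (euler_op n X D w) + X k w"
proof -
  assume k: "k < n"
  have "(\<Sum>i<n. X i (D i (X k w))) = (\<Sum>i<n. X k (X i (D i w)) + (if i = k then X k w else 0))"
    by (intro sum.cong refl) (simp add: D_X_commutator k X_add X_commute X_zero)
  with k show ?thesis
    by (simp add: euler_op_def X_sum sum.distrib)
qed

lemma koszul_d_zero: "koszul_d n X (\<lambda>_. 0) = (\<lambda>_. 0)"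
  by (simp add: fun_eq_iff koszul_d_signed X_zero)

lemma koszul_h_zero: "koszul_h n D (\<lambda>_. 0) = (\<lambda>_. 0)"
  by (simp add: fun_eq_iff koszul_h_def D_zero subset_eq)

lemma koszul_d_koszul_h_outside: "\<not> T \<subseteq> {..<n} \<Longrightarrow> koszul_d n X (koszul_h n D c) T = 0"
  by (simp add: koszul_d_signed koszul_h_def X_zero)

lemma koszul_d_diff:
  "koszul_d n X (\<lambda>S. a S - b S) T = koszul_d n X a T - koszul_d n X b T"
  unfolding koszul_d_signed sum_subtractf[symmetric]
  by (intro sum.cong refl) (simp add: X_diff signed_diff)

end

lemma koszul_chain_map:
  assumes "f 0 = 0" and "\<And>q z. z \<in> Mg q \<Longrightarrow> f z \<in> Mg q" and "koszul_chain n Mg p j c"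
  shows "koszul_chain n Mg p j (\<lambda>S. f (c S))"
  using assms unfolding koszul_chain_def by (metis (full_types))

lemma uniform_nilpotence_exponent:
  fixes f :: "'a::zero \<Rightarrow> 'a"
  assumes "f 0 = 0" and "finite A" and "\<And>x. x \<in> A \<Longrightarrow> \<exists>a. (f ^^ a) x = 0"
  shows "\<exists>N. \<forall>x\<in>A. (f ^^ N) x = 0"
proof -
  have mono: "(f ^^ b) x = 0" if "(f ^^ a) x = 0" and "a \<le> b" for a b x
  proof -
    have "(f ^^ m) 0 = 0" for m
      by (induction m) (simp_all add: assms(1))
    then show ?thesis
      using that by (metis funpow_add le_add_diff_inverse2 o_apply)
  qed
  from assms(2,3) show ?thesis
  proof (induction A rule: finite_induct)
    case (insert x A)
    then obtain N a where "\<forall>y\<in>A. (f ^^ N) y = 0" and "(f ^^ a) x = 0" by blast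
    then show ?case by (metis insert_iff max.cobounded1 max.cobounded2 mono)
  qed simp
qed

locale graded_weyl_module =
  fixes scale :: "'k::field_char_0 \<Rightarrow> 'm::ab_group_add \<Rightarrow> 'm"
    and n :: nat and Mg :: "int \<Rightarrow> 'm set" and X D :: "nat \<Rightarrow> 'm \<Rightarrow> 'm"
  assumes weyl_graded_module: "weyl_graded_module scale n Mg X D"
begin

sublocale vs: vector_space scale
  using weyl_graded_module by (simp add: weyl_graded_module_def)

lemma subspace_grade: "vs.subspace (Mg j)"
  using weyl_graded_module by (simp add: weyl_graded_module_def)

lemma X_linear: "i < n \<Longrightarrow> Vector_Spaces.linear scale scale (X i)"
  and D_linear: "i < n \<Longrightarrow> Vector_Spaces.linear scale scale (D i)"
  using weyl_graded_module by (simp_all add: weyl_graded_module_def)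

lemma X_grade: "i < n \<Longrightarrow> z \<in> Mg j \<Longrightarrow> X i z \<in> Mg (j + 1)"
  and D_grade: "i < n \<Longrightarrow> z \<in> Mg j \<Longrightarrow> D i z \<in> Mg (j - 1)"
  using weyl_graded_module by (simp_all add: weyl_graded_module_def)

lemma X_scale: "i < n \<Longrightarrow> X i (scale r x) = scale r (X i x)"
  using X_linear by (simp add: Vector_Spaces.linear_iff)

sublocale weyl_action n X D
proof (rule weyl_action.intro)
  show "additive (X i)" and "additive (D i)" if "i < n" for i
    using X_linear[OF that] D_linear[OF that]
    by (simp_all add: Vector_Spaces.linear_iff additive_def)
  show "X i (X k z) = X k (X i z)" if "i < n" and "k < n" for i k z
    using weyl_graded_module that by (simp add: weyl_graded_module_def)
  show "D i (X k z) = X k (D i z) + (if i = k then z else 0)" if "i < n" and "k < n" for i k z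
  proof -
    have "D i (X k z) - X k (D i z) = (if i = k then z else 0)"
      using weyl_graded_module that by (simp add: weyl_graded_module_def)
    then show ?thesis by (simp add: algebra_simps)
  qed
qed

lemma euler_op_grade: "z \<in> Mg j \<Longrightarrow> euler_op n X D z \<in> Mg j"
  unfolding euler_op_def
  using X_grade[OF _ D_grade] by (intro vs.subspace_sum[OF subspace_grade]) fastforce

definition euler_shift :: "int \<Rightarrow> 'm \<Rightarrow> 'm" where
  "euler_shift q w = euler_op n X D w - scale (of_int q) w"

lemma euler_shift_additive: "additive (euler_shift q)"
  using euler_op_additive
  by unfold_locales (simp add: euler_shift_def additive.add vs.scale_right_distrib algebra_simps)

lemma euler_shift_zero: "euler_shift q 0 = 0"
  using euler_shift_additive additive.zero by blast

lemma euler_shift_grade: "z \<in> Mg j \<Longrightarrow> euler_shift q z \<in> Mg j"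
  unfolding euler_shift_def
  by (intro vs.subspace_diff[OF subspace_grade] euler_op_grade vs.subspace_scale[OF subspace_grade])

lemma X_euler_shift: "k < n \<Longrightarrow> X k (euler_shift q w) = euler_shift (q + 1) (X k w)"
  by (simp add: euler_shift_def X_diff X_scale euler_op_X vs.scale_left_distrib algebra_simps)

lemma koszul_d_euler_shift:
  "koszul_d n X (\<lambda>S. euler_shift q (c S)) T = euler_shift (q + 1) (koszul_d n X c T)"
  unfolding koszul_d_signed additive.sum[OF euler_shift_additive]
  by (intro sum.cong refl) (simp add: X_euler_shift additive_signed[OF euler_shift_additive])

lemma koszul_d_scale: "koszul_d n X (\<lambda>S. scale r (a S)) T = scale r (koszul_d n X a T)"
  unfolding koszul_d_signed vs.scale_sum_right
  by (intro sum.cong refl) (simp add: X_scale signed_def)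

lemma koszul_chain_zero: "koszul_chain n Mg p j (\<lambda>_. 0)"
  by (simp add: koszul_chain_def vs.subspace_0[OF subspace_grade])

lemma koszul_chain_diff:
  assumes a: "koszul_chain n Mg p j a" and b: "koszul_chain n Mg p j b"
  shows "koszul_chain n Mg p j (\<lambda>S. a S - b S)"
proof -
  have "S \<subseteq> {..<n} \<and> card S = p" if "a S - b S \<noteq> 0" for S
    using that a b unfolding koszul_chain_def by (cases "a S = 0") auto
  with a b show ?thesis
    unfolding koszul_chain_def by (simp add: vs.subspace_diff[OF subspace_grade])
qed

lemma koszul_chain_scale: "koszul_chain n Mg p j a \<Longrightarrow> koszul_chain n Mg p j (\<lambda>S. scale r (a S))"
  by (rule koszul_chain_map) (simp_all add: vs.subspace_scale[OF subspace_grade])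

lemma koszul_chain_euler_shift:
  "koszul_chain n Mg p j a \<Longrightarrow> koszul_chain n Mg p j (\<lambda>S. euler_shift q (a S))"
  by (rule koszul_chain_map) (simp_all add: euler_shift_zero euler_shift_grade)

lemma koszul_chain_koszul_h:
  assumes c: "koszul_chain n Mg p j c"
  shows "koszul_chain n Mg (Suc p) j (koszul_h n D c)"
proof -
  have "koszul_h n D c T \<in> Mg (j - int (Suc p))" for T
  proof (cases "T \<subseteq> {..<n}")
    case True
    show ?thesis
      unfolding koszul_h_def if_P[OF True]
    proof (rule vs.subspace_sum[OF subspace_grade])
      fix l assume "l \<in> T"
      then have "D l (c (T - {l})) \<in> Mg (j - int p - 1)"
        using c True D_grade by (auto simp add: koszul_chain_def)
      then show "signed (num_below (T - {l}) l) (D l (c (T - {l}))) \<in> Mg (j - int (Suc p))"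
        by (simp add: signed_def vs.subspace_neg[OF subspace_grade] algebra_simps)
    qed
  qed (simp add: koszul_h_def vs.subspace_0[OF subspace_grade])
  moreover have "T \<subseteq> {..<n} \<and> card T = Suc p" if nonzero: "koszul_h n D c T \<noteq> 0" for T
  proof -
    have T: "T \<subseteq> {..<n}"
      using nonzero by (simp add: koszul_h_def split: if_splits)
    obtain l where l: "l \<in> T" and "signed (num_below (T - {l}) l) (D l (c (T - {l}))) \<noteq> 0"
      using nonzero unfolding koszul_h_def if_P[OF T] by (rule sum.not_neutral_contains_not_neutral)
    then have "c (T - {l}) \<noteq> 0"
      using T D_zero by force
    then have "card (T - {l}) = p"
      using c by (simp add: koszul_chain_def)
    with T l show ?thesis
      by (metis card_Suc_Diff1 finite_lessThan finite_subset)
  qed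
  ultimately show ?thesis
    by (simp add: koszul_chain_def)
qed

lemma koszul_d_koszul_h_cycle:
  assumes c: "koszul_chain n Mg i j c" and cycle: "koszul_d n X c = (\<lambda>_. 0)"
  shows "koszul_d n X (koszul_h n D c) T = euler_shift (j - int i) (c T) + scale (of_int j) (c T)"
proof (cases "T \<subseteq> {..<n}")
  case True
  have "(\<Sum>l\<in>T. c T) = scale (of_nat i) (c T)"
    using c by (cases "c T = 0") (simp_all add: koszul_chain_def vs.sum_constant_scale)
  moreover have "scale (of_int j) (c T) = scale (of_int (j - int i)) (c T) + scale (of_nat i) (c T)"
    by (simp flip: vs.scale_left_distrib)
  ultimately show ?thesis
    using koszul_homotopy[OF True, of c] by (simp add: cycle koszul_h_zero euler_shift_def)
next
  case False
  then have "c T = 0"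
    using c by (auto simp add: koszul_chain_def)
  with False show ?thesis
    by (simp add: koszul_d_koszul_h_outside euler_shift_zero)
qed

text \<open>With L = E - (j - i), the homotopy gives d (h c) = L c + j c for a cycle c, and L c is a
  cycle annihilated by a smaller power of L; if L c = d b' then c = d ((h c - b') / j).\<close>
lemma koszul_cycle_boundary_of_nilpotent:
  assumes j: "j \<noteq> 0"
  shows "koszul_chain n Mg i j c \<Longrightarrow> koszul_d n X c = (\<lambda>_. 0)
    \<Longrightarrow> \<forall>S. (euler_shift (j - int i) ^^ a) (c S) = 0
    \<Longrightarrow> \<exists>b. koszul_chain n Mg (Suc i) j b \<and> koszul_d n X b = c"
proof (induction a arbitrary: c)
  case 0
  then have "c = (\<lambda>_. 0)"
    by (simp add: fun_eq_iff)
  then show ?case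
    using koszul_chain_zero koszul_d_zero by blast
next
  case (Suc a)
  let ?L = "euler_shift (j - int i)"
  have "koszul_chain n Mg i j (\<lambda>S. ?L (c S))"
    by (rule koszul_chain_euler_shift[OF Suc.prems(1)])
  moreover have "koszul_d n X (\<lambda>S. ?L (c S)) = (\<lambda>_. 0)"
    by (simp add: fun_eq_iff koszul_d_euler_shift Suc.prems(2) euler_shift_zero)
  moreover have "\<forall>S. (?L ^^ a) (?L (c S)) = 0"
    using Suc.prems(3) by (simp add: funpow_Suc_right del: funpow.simps)
  ultimately obtain b' where b': "koszul_chain n Mg (Suc i) j b'"
    and d_b': "koszul_d n X b' = (\<lambda>S. ?L (c S))"
    using Suc.IH by blast
  define b where "b = (\<lambda>S. scale (inverse (of_int j)) (koszul_h n D c S - b' S))"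
  have "koszul_chain n Mg (Suc i) j b"
    unfolding b_def by (intro koszul_chain_scale koszul_chain_diff koszul_chain_koszul_h Suc.prems(1) b')
  moreover have "koszul_d n X b = c"
  proof
    fix T
    have "koszul_d n X b T = scale (inverse (of_int j)) (scale (of_int j) (c T))"
      using koszul_d_koszul_h_cycle[OF Suc.prems(1,2)] d_b'
      by (simp add: b_def koszul_d_scale koszul_d_diff)
    then show "koszul_d n X b T = c T"
      using j by simp
  qed
  ultimately show ?case
    by blast
qed

lemma koszul_cycle_boundary:
  assumes eulerian: "generalized_eulerian scale n Mg X D" and j: "j \<noteq> 0"
    and c: "koszul_chain n Mg i j c" and cycle: "koszul_d n X c = (\<lambda>_. 0)"
  shows "\<exists>b. koszul_chain n Mg (Suc i) j b \<and> koszul_d n X b = c"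
proof -
  let ?L = "euler_shift (j - int i)"
  have "\<exists>a. (?L ^^ a) (c S) = 0" for S
  proof -
    have "c S \<in> Mg (j - int i)"
      using c by (simp add: koszul_chain_def)
    with eulerian show ?thesis
      unfolding generalized_eulerian_def euler_shift_def[abs_def] by blast
  qed
  define A where "A = insert 0 (c ` Pow {..<n})"
  have c_A: "c S \<in> A" for S
    using c by (auto simp add: A_def koszul_chain_def)
  have "finite A"
    by (simp add: A_def)
  moreover have "\<exists>a. (?L ^^ a) x = 0" if "x \<in> A" for x
    using that \<open>\<And>S. \<exists>a. (?L ^^ a) (c S) = 0\<close> unfolding A_def by (metis funpow_0 imageE insertE)
  ultimately obtain N where "\<forall>x\<in>A. (?L ^^ N) x = 0"
    using uniform_nilpotence_exponent[of ?L, OF euler_shift_zero] by blast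
  then show ?thesis
    using koszul_cycle_boundary_of_nilpotent[OF j c cycle] c_A by blast
qed

end

theorem theorem5p1:
  fixes scale :: "'k::field_char_0 \<Rightarrow> 'm::ab_group_add \<Rightarrow> 'm"
    and n :: nat and Mg :: "int \<Rightarrow> 'm set" and X D :: "nat \<Rightarrow> 'm \<Rightarrow> 'm"
  assumes "weyl_graded_module scale n Mg X D"
    and "generalized_eulerian scale n Mg X D"
  shows "\<forall>i j c. j \<noteq> 0 \<longrightarrow> koszul_chain n Mg i j c \<longrightarrow> koszul_d n X c = (\<lambda>_. 0) \<longrightarrow>
           (\<exists>b. koszul_chain n Mg (Suc i) j b \<and> koszul_d n X b = c)"
proof -
  interpret graded_weyl_module scale n Mg X D
    by (rule graded_weyl_module.intro) (fact assms(1))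
  show ?thesis
    using koszul_cycle_boundary[OF assms(2)] by blast
qed

end
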